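(* Let $d,K\ge2$, $a^\dagger\in\{1,\dots,K\}$, $\upsilon>0$, $\delta\in(0,1)$, $\xi>0$, $x^\dagger\in\mathbb{R}^d$. For each arm $a$ let $\hat\theta_a\in\mathbb{R}^d$ and $\widetilde V_a\in\mathbb{R}^{d\times d}$ be symmetric positive definite, and for $a\ne a^\dagger$ put $A_a=\widetilde V_a^{-1}+\widetilde V_{a^\dagger}^{-1}$ and $$\mathcal C'_a=\Big\{z\in\mathbb{R}^d:\ \|z-\hat\theta_a\|_{A_a^{-1}}\le \upsilon\,\Phi^{-1}\Big(1-\tfrac{\delta}{K-1}\Big)\Big\}.$$ Then for every $y\in\mathbb{R}^d$ and $a\neq a^\dagger$, the inequality $$\langle x^\dagger+y,\hat\theta_{a^\dagger}-\hat\theta_a\rangle-\xi\ \ge\ \upsilon\,\Phi^{-1}\Big(1-\tfrac{\delta}{K-1}\Big)\,\|x^\dagger+y\|_{\widetilde V_a^{-1}+\widetilde V_{a^\dagger}^{-1}}$$ is equivalent to $\langle x^\dagger+y,\hat\theta_{a^\dagger}\rangle-\xi\ge\max_{z\in\mathcal C'_a}\langle z,x^\dagger+y\rangle$; consequently, the problem of minimizing $\|y\|$ subject to this inequality for all $a\neq a^\dagger$ is feasible if and only if $\hat\theta_{a^\dagger}\notin\mathrm{Conv}\big(\bigcup_{a\neq a^\dagger}\mathcal C'_a\big)$.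
   Context: $\Phi$ is the standard normal cumulative distribution function; $\|x\|_V=\sqrt{x^\top Vx}$; $\mathrm{Conv}$ is the convex hull. This is the relaxed attacker problem against Linear Thompson Sampling (posterior samples $\tilde\theta_a\sim\mathcal N(\hat\theta_a,\upsilon^2\widetilde V_a^{-1})$), i.e. a second-order cone program. (For the equivalence, $\Phi^{-1}(1-\delta/(K-1))\ge0$ is assumed, i.e. $\delta\le (K-1)/2$.) *)

theory Defs
  imports "HOL-Probability.Probability"
begin

definition Phi :: "real \<Rightarrow> real" where
  "Phi = cdf (density lborel std_normal_density)"

definition Phi_inv :: "real \<Rightarrow> real" where
  "Phi_inv p = (THE t. Phi t = p)"

definition wnorm :: "real^'d \<Rightarrow> real^'d^'d \<Rightarrow> real" where
  "wnorm x V = sqrt (x \<bullet> (V *v x))"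

definition sym_posdef :: "real^'d^'d \<Rightarrow> bool" where
  "sym_posdef V \<longleftrightarrow> transpose V = V \<and> (\<forall>x. x \<noteq> 0 \<longrightarrow> x \<bullet> (V *v x) > 0)"

end

theory Submission
  imports Defs
begin

text \<open>
  For symmetric positive definite \<open>A\<close> and \<open>r \<ge> 0\<close>, the support function of the ellipsoid
  \<open>{z. wnorm (z - c) (A\<inverse>) \<le> r}\<close> in direction \<open>w\<close> is \<open>c \<bullet> w + r * wnorm w A\<close>: the bound is
  Cauchy--Schwarz for the form of \<open>A\<inverse>\<close>, and it is attained at \<open>c + (r / wnorm w A) A w\<close>.
  The radius \<open>\<upsilon> \<Phi>\<inverse>(1 - \<delta>/(K-1))\<close> is nonnegative since the level is at least \<open>1/2 = \<Phi> 0\<close>.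
  So with \<open>w = x\<dagger> + y\<close> each constraint says exactly that \<open>C'\<^sub>a\<close> lies in the half-space
  \<open>{z. z \<bullet> w \<le> \<theta>\<^sub>a\<^sub>\<dagger> \<bullet> w - \<xi>}\<close>, which is the first claim. Feasibility therefore means that a
  hyperplane separates \<open>\<theta>\<^sub>a\<^sub>\<dagger>\<close> with margin \<open>\<xi>\<close> from the compact union of the ellipsoids, and
  by the separating hyperplane theorem this happens iff \<open>\<theta>\<^sub>a\<^sub>\<dagger>\<close> lies outside its convex hull.
\<close>

interpretation std_normal: real_distribution "density lborel std_normal_density"
  by (rule real_dist_normal_dist)

lemma null_sets_std_normal_iff:
  assumes "A \<in> sets borel"
  shows "A \<in> null_sets (density lborel std_normal_density) \<longleftrightarrow> A \<in> null_sets lborel"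
proof -
  have "(AE x in lborel. x \<in> A \<longrightarrow> ennreal (std_normal_density x) = 0) \<longleftrightarrow> (AE x in lborel. x \<notin> A)"
    using normal_density_pos[of 1 0] by (intro AE_cong) (auto, metis less_irrefl)
  then show ?thesis
    using assms by (subst null_sets_density_iff) (auto simp: AE_iff_null_sets)
qed

lemma isCont_Phi: "isCont Phi x"
proof -
  have "{x} \<in> null_sets (density lborel std_normal_density)"
    by (subst null_sets_std_normal_iff) auto
  then show ?thesis
    unfolding Phi_def std_normal.isCont_cdf by (simp add: measure_def null_setsD1)
qed

lemma strict_mono_Phi: "strict_mono Phi"
proof
  fix x y :: real assume "x < y"
  have "{x<..y} \<notin> null_sets (density lborel std_normal_density)"
    using \<open>x < y\<close> by (subst null_sets_std_normal_iff) auto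
  then have "measure (density lborel std_normal_density) {x<..y} > 0"
    using std_normal.emeasure_eq_measure measure_nonneg[of _ "{x<..y}"]
    by (auto simp: null_sets_def less_eq_real_def)
  then show "Phi x < Phi y"
    unfolding Phi_def using std_normal.cdf_diff_eq[OF \<open>x < y\<close>] by simp
qed

text \<open>The standard normal density is even, so the half-lines \<open>{..0}\<close> and \<open>{0..}\<close> have equal mass.\<close>
lemma Phi_0: "Phi 0 = 1/2"
proof -
  let ?M = "density lborel std_normal_density"
  have "emeasure ?M {..0} = (\<integral>\<^sup>+x. ennreal (std_normal_density x) * indicator {..0} x \<partial>distr lborel borel uminus)"
    by (simp add: emeasure_density lborel_distr_uminus)
  also have "\<dots> = (\<integral>\<^sup>+x. ennreal (std_normal_density x) * indicator {0..} x \<partial>lborel)"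
    by (subst nn_integral_distr) (auto intro!: nn_integral_cong simp: normal_density_def indicator_def)
  also have "\<dots> = emeasure ?M {0..}"
    by (simp add: emeasure_density)
  finally have half_lines: "measure ?M {..0} = measure ?M {0..}"
    by (simp add: measure_def)
  have "{0::real} \<in> null_sets ?M"
    by (subst null_sets_std_normal_iff) auto
  then have "measure ?M {0} = 0"
    by (simp add: measure_def null_setsD1)
  moreover have "measure ?M {0..} = measure ?M ({0} \<union> {0<..})"
    by (simp only: ivl_disj_un_singleton(1))
  ultimately have "measure ?M {0..} = measure ?M {0<..}"
    using std_normal.finite_measure_Union[of "{0}" "{0<..}"] by simp
  moreover have "{..0::real} \<union> {0<..} = UNIV" "{..0::real} \<inter> {0<..} = {}"
    by auto
  then have "measure ?M {..0} + measure ?M {0<..} = 1"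
    using std_normal.finite_measure_Union[of "{..0}" "{0<..}"] std_normal.prob_space by auto
  ultimately show ?thesis
    using half_lines unfolding Phi_def cdf_def by simp
qed

lemma Phi_surj:
  assumes "0 < p" "p < 1"
  obtains t where "Phi t = p"
proof -
  have "(Phi \<longlongrightarrow> 0) at_bot" "(Phi \<longlongrightarrow> 1) at_top"
    unfolding Phi_def by (rule std_normal.cdf_lim_at_bot std_normal.cdf_lim_at_top_prob)+
  then obtain a b where "Phi a < p" "p < Phi b"
    using order_tendstoD(2)[of Phi 0 at_bot p] order_tendstoD(1)[of Phi 1 at_top p] assms
    by (auto simp: eventually_at_bot_linorder eventually_at_top_linorder)
  moreover from calculation have "a \<le> b"
    using strict_mono_less[OF strict_mono_Phi, of a b] by linarith
  ultimately show ?thesis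
    using IVT[of Phi a p b] isCont_Phi that by (auto simp: less_imp_le)
qed

lemma Phi_inv_Phi: "Phi_inv (Phi t) = t"
  unfolding Phi_inv_def using strict_mono_eq[OF strict_mono_Phi] by blast

lemma Phi_inv_nonneg:
  assumes "1/2 \<le> p" "p < 1"
  shows "0 \<le> Phi_inv p"
proof -
  obtain t where t: "Phi t = p"
    using Phi_surj[of p] assms by force
  have "\<not> t < 0"
    using strict_mono_less[OF strict_mono_Phi, of t 0] Phi_0 t assms by linarith
  then show ?thesis
    using Phi_inv_Phi t by force
qed

lemma sym_posdef_nonneg: "sym_posdef A \<Longrightarrow> 0 \<le> x \<bullet> (A *v x)"
  unfolding sym_posdef_def by (cases "x = 0") (auto intro: less_imp_le)

lemma wnorm_nonneg: "sym_posdef A \<Longrightarrow> 0 \<le> wnorm x A"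
  unfolding wnorm_def by (simp add: sym_posdef_nonneg)

lemma symmetric_inner_matrix_vector:
  fixes A :: "real^'d^'d"
  assumes "transpose A = A"
  shows "x \<bullet> (A *v y) = y \<bullet> (A *v x)"
  by (metis assms dot_lmul_matrix inner_commute transpose_matrix_vector)

lemma sym_posdef_matrix_inv:
  fixes A :: "real^'d^'d"
  assumes "sym_posdef A"
  shows "A ** matrix_inv A = mat 1" "matrix_inv A ** A = mat 1"
proof -
  have "\<forall>x. A *v x = 0 \<longrightarrow> x = 0"
    using assms unfolding sym_posdef_def by force
  then have "invertible A"
    using invertible_left_inverse matrix_left_invertible_ker by blast
  then have "\<exists>A'. A ** A' = mat 1 \<and> A' ** A = mat 1"
    unfolding invertible_def .
  then show "A ** matrix_inv A = mat 1" "matrix_inv A ** A = mat 1"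
    unfolding matrix_inv_def by (metis (mono_tags, lifting) someI_ex)+
qed

lemma sym_posdef_inv:
  fixes A :: "real^'d^'d"
  assumes "sym_posdef A"
  shows "sym_posdef (matrix_inv A)"
proof -
  let ?B = "matrix_inv A"
  note inv = sym_posdef_matrix_inv[OF assms]
  have "transpose A = A"
    using assms unfolding sym_posdef_def by simp
  then have "transpose ?B ** A = mat 1"
    by (metis inv(1) matrix_transpose_mul transpose_mat)
  then have "transpose ?B = ?B"
    by (metis inv(1) matrix_mul_assoc matrix_mul_lid matrix_mul_rid)
  moreover have "x \<bullet> (?B *v x) > 0" if "x \<noteq> 0" for x
  proof -
    define u where "u = ?B *v x"
    have x: "x = A *v u"
      unfolding u_def by (simp add: matrix_vector_mul_assoc inv(1))
    then have "u \<noteq> 0"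
      using that by auto
    then have "u \<bullet> (A *v u) > 0"
      using assms unfolding sym_posdef_def by blast
    then show ?thesis
      by (metis x u_def inner_commute)
  qed
  ultimately show ?thesis
    unfolding sym_posdef_def by blast
qed

lemma sym_posdef_add:
  fixes A B :: "real^'d^'d"
  assumes "sym_posdef A" "sym_posdef B"
  shows "sym_posdef (A + B)"
proof -
  have "transpose (A + B) = transpose A + transpose B"
    by (simp add: transpose_def vec_eq_iff)
  moreover have "x \<bullet> ((A + B) *v x) = x \<bullet> (A *v x) + x \<bullet> (B *v x)" for x
    by (simp add: matrix_vector_mult_add_rdistrib inner_add_right)
  ultimately show ?thesis
    using assms unfolding sym_posdef_def by (auto intro: add_pos_pos)
qed

lemma sym_posdef_Cauchy_Schwarz:
  fixes B :: "real^'d^'d"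
  assumes "sym_posdef B"
  shows "(u \<bullet> (B *v v))\<^sup>2 \<le> (u \<bullet> (B *v u)) * (v \<bullet> (B *v v))"
proof (cases "v = 0")
  case True
  then show ?thesis by simp
next
  case False
  define a b c where "a = v \<bullet> (B *v v)" and "b = u \<bullet> (B *v v)" and "c = u \<bullet> (B *v u)"
  have "a > 0"
    using assms False unfolding sym_posdef_def a_def by blast
  have "v \<bullet> (B *v u) = b"
    using assms symmetric_inner_matrix_vector unfolding sym_posdef_def b_def by metis
  then have "(u + t *\<^sub>R v) \<bullet> (B *v (u + t *\<^sub>R v)) = c + 2 * t * b + t\<^sup>2 * a" for t
    unfolding a_def b_def c_def
    by (simp add: matrix_vector_right_distrib matrix_vector_mult_scaleR
        inner_add_left inner_add_right power2_eq_square algebra_simps)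
  \<comment> \<open>\<open>t = - b / a\<close> minimises this quadratic in \<open>t\<close>\<close>
  from this[of "- b / a"] have "(u - (b/a) *\<^sub>R v) \<bullet> (B *v (u - (b/a) *\<^sub>R v)) = c - b\<^sup>2 / a"
    using \<open>a > 0\<close> by (simp add: field_simps power2_eq_square)
  then have "b\<^sup>2 / a \<le> c"
    using sym_posdef_nonneg[OF assms] by (metis diff_ge_0_iff_ge)
  then show ?thesis
    using \<open>a > 0\<close> unfolding a_def b_def c_def by (simp add: field_simps)
qed

definition ellipsoid :: "real^'d \<Rightarrow> real^'d^'d \<Rightarrow> real \<Rightarrow> (real^'d) set" where
  "ellipsoid c A r = {z. wnorm (z - c) (matrix_inv A) \<le> r}"

lemma inner_le_ellipsoid_support:
  fixes A :: "real^'d^'d"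
  assumes A: "sym_posdef A" and z: "z \<in> ellipsoid c A r"
  shows "z \<bullet> w \<le> c \<bullet> w + r * wnorm w A"
proof -
  let ?B = "matrix_inv A"
  have B: "sym_posdef ?B"
    using A by (rule sym_posdef_inv)
  have w: "?B *v (A *v w) = w"
    by (simp add: matrix_vector_mul_assoc sym_posdef_matrix_inv(2)[OF A])
  have "((z - c) \<bullet> w)\<^sup>2 \<le> ((z - c) \<bullet> (?B *v (z - c))) * (w \<bullet> (A *v w))"
    using sym_posdef_Cauchy_Schwarz[OF B, of "z - c" "A *v w"] by (simp add: w inner_commute)
  then have "(z - c) \<bullet> w \<le> wnorm (z - c) ?B * wnorm w A"
    unfolding wnorm_def by (simp add: real_le_rsqrt flip: real_sqrt_mult)
  also have "\<dots> \<le> r * wnorm w A"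
    using z wnorm_nonneg[OF A] unfolding ellipsoid_def by (simp add: mult_right_mono)
  finally show ?thesis
    by (simp add: inner_diff_left)
qed

lemma ellipsoid_support_attained:
  fixes A :: "real^'d^'d"
  assumes A: "sym_posdef A" and r: "0 \<le> r"
  obtains z where "z \<in> ellipsoid c A r" "z \<bullet> w = c \<bullet> w + r * wnorm w A"
proof (cases "wnorm w A = 0")
  case True
  then show ?thesis
    using r that[of c] by (simp add: ellipsoid_def wnorm_def)
next
  case False
  let ?B = "matrix_inv A"
  define s where "s = wnorm w A"
  have "s > 0"
    using False wnorm_nonneg[OF A, of w] unfolding s_def by linarith
  have s2: "(A *v w) \<bullet> w = s\<^sup>2"
    using sym_posdef_nonneg[OF A] unfolding s_def wnorm_def by (simp add: inner_commute)
  have w: "?B *v (A *v w) = w"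
    by (simp add: matrix_vector_mul_assoc sym_posdef_matrix_inv(2)[OF A])
  define z where "z = c + (r / s) *\<^sub>R (A *v w)"
  have "(z - c) \<bullet> (?B *v (z - c)) = r\<^sup>2"
    unfolding z_def using \<open>s > 0\<close> by (simp add: matrix_vector_mult_scaleR w s2 field_simps power2_eq_square)
  then have "z \<in> ellipsoid c A r"
    using r unfolding ellipsoid_def wnorm_def by simp
  moreover have "z \<bullet> w = c \<bullet> w + r * s"
    unfolding z_def using \<open>s > 0\<close> by (simp add: inner_add_left s2 power2_eq_square)
  ultimately show ?thesis
    using that unfolding s_def by blast
qed

lemma ellipsoid_inner_le_iff:
  fixes A :: "real^'d^'d"
  assumes "sym_posdef A" "0 \<le> r"
  shows "(\<forall>z\<in>ellipsoid c A r. z \<bullet> w \<le> t) \<longleftrightarrow> c \<bullet> w + r * wnorm w A \<le> t"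
  using inner_le_ellipsoid_support[OF assms(1)] ellipsoid_support_attained[OF assms]
  by (smt (verit))

lemma SUP_inner_ellipsoid:
  fixes A :: "real^'d^'d"
  assumes "sym_posdef A" "0 \<le> r"
  shows "(SUP z\<in>ellipsoid c A r. z \<bullet> w) = c \<bullet> w + r * wnorm w A"
proof -
  obtain z0 where "z0 \<in> ellipsoid c A r" "z0 \<bullet> w = c \<bullet> w + r * wnorm w A"
    using ellipsoid_support_attained[OF assms] .
  then show ?thesis
    using inner_le_ellipsoid_support[OF assms(1)] by (intro cSup_eq_maximum) (auto, metis image_eqI)
qed

lemma compact_ellipsoid:
  fixes A :: "real^'d^'d"
  assumes A: "sym_posdef A" and r: "0 \<le> r"
  shows "compact (ellipsoid c A r)"
proof -
  have "continuous_on UNIV (\<lambda>z. wnorm (z - c) (matrix_inv A))"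
    unfolding wnorm_def by (intro continuous_intros bounded_linear.continuous_on[OF matrix_vector_mul_bounded_linear])
  then have "closed (ellipsoid c A r)"
    unfolding ellipsoid_def by (rule closed_Collect_le) (rule continuous_on_const)
  \<comment> \<open>each coordinate is bounded by the support function in the directions \<open>\<plusminus>e\<^sub>i\<close>\<close>
  define bd where "bd i = \<bar>c $ i\<bar> + r * (wnorm (axis i 1) A + wnorm (- axis i 1) A)" for i
  have coord: "\<bar>z $ i\<bar> \<le> bd i" if "z \<in> ellipsoid c A r" for z i
    using inner_le_ellipsoid_support[OF A that, of "axis i 1"]
      inner_le_ellipsoid_support[OF A that, of "- axis i 1"]
      wnorm_nonneg[OF A, of "axis i 1"] wnorm_nonneg[OF A, of "- axis i 1"] r
    unfolding bd_def cart_eq_inner_axis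
    by (simp add: inner_minus_right abs_le_iff distrib_left) (smt (verit) mult_nonneg_nonneg)
  have "norm z \<le> (\<Sum>i\<in>UNIV. bd i)" if "z \<in> ellipsoid c A r" for z
    using norm_le_l1_cart[of z] sum_mono[of UNIV "\<lambda>i. \<bar>z $ i\<bar>" bd] coord[OF that] by force
  then have "bounded (ellipsoid c A r)"
    unfolding bounded_iff by blast
  with \<open>closed (ellipsoid c A r)\<close> show ?thesis
    by (simp add: compact_eq_bounded_closed)
qed

lemma notin_convex_hull_iff_margin:
  fixes S :: "'a::euclidean_space set"
  assumes "compact S" "0 < m"
  shows "p \<notin> convex hull S \<longleftrightarrow> (\<exists>w. \<forall>z\<in>S. z \<bullet> w \<le> p \<bullet> w - m)"
proof
  assume "p \<notin> convex hull S"
  moreover have "closed (convex hull S)"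
    by (simp add: assms(1) compact_convex_hull compact_imp_closed)
  ultimately obtain a b where ab: "a \<bullet> p < b" "\<forall>x\<in>convex hull S. b < a \<bullet> x"
    using separating_hyperplane_closed_point[OF convex_convex_hull] by blast
  \<comment> \<open>rescale the separating functional so that the gap becomes exactly \<open>m\<close>\<close>
  define k where "k = m / (b - a \<bullet> p)"
  have "0 < k"
    unfolding k_def using ab(1) assms(2) by simp
  have "z \<bullet> (- k *\<^sub>R a) \<le> p \<bullet> (- k *\<^sub>R a) - m" if "z \<in> S" for z
  proof -
    have "b < a \<bullet> z"
      using ab(2) hull_inc[OF that] by blast
    then have "k * b \<le> k * (a \<bullet> z)"
      using \<open>0 < k\<close> by simp
    moreover have "k * (b - a \<bullet> p) = m"
      unfolding k_def using ab(1) by simp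
    ultimately show ?thesis
      by (simp add: inner_commute algebra_simps)
  qed
  then show "\<exists>w. \<forall>z\<in>S. z \<bullet> w \<le> p \<bullet> w - m"
    by blast
next
  assume "\<exists>w. \<forall>z\<in>S. z \<bullet> w \<le> p \<bullet> w - m"
  then obtain w where "S \<subseteq> {z. w \<bullet> z \<le> w \<bullet> p - m}"
    by (auto simp: inner_commute)
  then have "convex hull S \<subseteq> {z. w \<bullet> z \<le> w \<bullet> p - m}"
    by (rule hull_minimal) (rule convex_halfspace_le)
  then show "p \<notin> convex hull S"
    using assms(2) by auto
qed

theorem mainTheorem3:
  fixes K :: nat and adag :: nat and ups delta xi :: real
    and xdag :: "real^'d"
    and theta :: "nat \<Rightarrow> real^'d"
    and V :: "nat \<Rightarrow> real^'d^'d"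
    and C :: "nat \<Rightarrow> (real^'d) set"
  assumes hd: "CARD('d) \<ge> 2" and hK: "K \<ge> 2"
    and hadag: "adag \<in> {1..K}"
    and hups: "ups > 0"
    and hdelta: "0 < delta" "delta < 1"
    and hdelta2: "delta \<le> (real K - 1) / 2"
    and hxi: "xi > 0"
    and hV: "\<forall>a\<in>{1..K}. sym_posdef (V a)"
    and hC: "\<forall>a\<in>{1..K} - {adag}. C a =
      {z. wnorm (z - theta a) (matrix_inv (matrix_inv (V a) + matrix_inv (V adag)))
          \<le> ups * Phi_inv (1 - delta / (real K - 1))}"
  shows "(\<forall>y :: real^'d. \<forall>a\<in>{1..K} - {adag}.
            ((xdag + y) \<bullet> (theta adag - theta a) - xi
               \<ge> ups * Phi_inv (1 - delta / (real K - 1))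
                 * wnorm (xdag + y) (matrix_inv (V a) + matrix_inv (V adag)))
            \<longleftrightarrow> ((xdag + y) \<bullet> theta adag - xi \<ge> (SUP z\<in>C a. z \<bullet> (xdag + y))))
       \<and> ((\<exists>y :: real^'d. \<forall>a\<in>{1..K} - {adag}.
            (xdag + y) \<bullet> (theta adag - theta a) - xi
               \<ge> ups * Phi_inv (1 - delta / (real K - 1))
                 * wnorm (xdag + y) (matrix_inv (V a) + matrix_inv (V adag)))
          \<longleftrightarrow> theta adag \<notin> convex hull (\<Union>a\<in>{1..K} - {adag}. C a))"
proof -
  define r where "r = ups * Phi_inv (1 - delta / (real K - 1))"
  define A where "A a = matrix_inv (V a) + matrix_inv (V adag)" for a
  let ?I = "{1..K} - {adag}"
  have "1 / 2 \<le> 1 - delta / (real K - 1)" "1 - delta / (real K - 1) < 1"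
    using hK hdelta hdelta2 by (simp_all add: field_simps)
  then have r: "0 \<le> r"
    unfolding r_def using Phi_inv_nonneg hups by simp
  have A: "sym_posdef (A a)" if "a \<in> ?I" for a
    unfolding A_def using that hadag hV by (intro sym_posdef_add sym_posdef_inv) auto
  have C: "C a = ellipsoid (theta a) (A a) r" if "a \<in> ?I" for a
    using hC that unfolding ellipsoid_def A_def r_def by blast
  have SUP_C: "(SUP z\<in>C a. z \<bullet> w) = theta a \<bullet> w + r * wnorm w (A a)" if "a \<in> ?I" for a w
    using SUP_inner_ellipsoid[OF A[OF that] r] C[OF that] by simp
  have rearrange: "w \<bullet> (theta adag - theta a) - xi \<ge> q \<longleftrightarrow> theta a \<bullet> w + q \<le> theta adag \<bullet> w - xi"
    for w a q
    by (simp add: inner_diff_right inner_commute[of w]; linarith)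
  have constraint_iff: "w \<bullet> (theta adag - theta a) - xi \<ge> r * wnorm w (A a)
      \<longleftrightarrow> (\<forall>z\<in>C a. z \<bullet> w \<le> theta adag \<bullet> w - xi)" if "a \<in> ?I" for a w
    unfolding rearrange C[OF that] ellipsoid_inner_le_iff[OF A[OF that] r] ..
  have "compact (\<Union>a\<in>?I. C a)"
    using compact_ellipsoid[OF A r] C by (intro compact_UN) auto
  then have "theta adag \<notin> convex hull (\<Union>a\<in>?I. C a)
      \<longleftrightarrow> (\<exists>w. \<forall>z\<in>(\<Union>a\<in>?I. C a). z \<bullet> w \<le> theta adag \<bullet> w - xi)"
    by (rule notin_convex_hull_iff_margin[OF _ hxi])
  also have "\<dots> \<longleftrightarrow> (\<exists>w. \<forall>a\<in>?I. w \<bullet> (theta adag - theta a) - xi \<ge> r * wnorm w (A a))"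
    by (simp add: ball_UN constraint_iff)
  also have "\<dots> \<longleftrightarrow> (\<exists>y. \<forall>a\<in>?I. (xdag + y) \<bullet> (theta adag - theta a) - xi \<ge> r * wnorm (xdag + y) (A a))"
    by (metis add.commute diff_add_cancel)
  finally have feasible_iff: "(\<exists>y. \<forall>a\<in>?I. (xdag + y) \<bullet> (theta adag - theta a) - xi
      \<ge> r * wnorm (xdag + y) (A a)) \<longleftrightarrow> theta adag \<notin> convex hull (\<Union>a\<in>?I. C a)"
    by blast
  have "(xdag + y) \<bullet> (theta adag - theta a) - xi \<ge> r * wnorm (xdag + y) (A a)
      \<longleftrightarrow> (xdag + y) \<bullet> theta adag - xi \<ge> (SUP z\<in>C a. z \<bullet> (xdag + y))" if "a \<in> ?I" for y a
    unfolding SUP_C[OF that] rearrange inner_commute[of "xdag + y" "theta adag"] ..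
  with feasible_iff show ?thesis
    unfolding r_def A_def by blast
qed

end
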